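(* Let $\ell\ge 6$ and $w\ge 0$ be integers, let $A=\langle A_1,\dots,A_\ell\rangle$ and $B=\langle B_1,\dots,B_\ell\rangle$ be real sequences, and let $\delta:\mathbb{R}\times\mathbb{R}\to[0,\infty)$ be a symmetric pairwise cost function with $\delta(a,a)=0$ for all $a$. Suppose that for all reals $a,b,x,y$ with $a\le x\le y\le b$ or $a\ge x\ge y\ge b$ we have $\delta(a,b)\ge \delta(a,y)+\delta(b,x)-\delta(x,y)$. Define $$\mathrm{LB\_Petitjean}_w(A,B)=\mathrm{minlrpaths}(A,B)+\sum_{i=4}^{\ell-3} \kappa_i+\sum_{j=4}^{\ell-3}\beta_j,$$ where $\kappa_i=\delta(A_i,\mathbb{U}^B_i)$ if $A_i>\mathbb{U}^B_i$, $\kappa_i=\delta(A_i,\mathbb{L}^B_i)$ if $A_i<\mathbb{L}^B_i$, and $\kappa_i=0$ otherwise; and $\beta_j$ is given by the first applicable case among: (1) $\delta(B_j,\mathbb{U}^A_j)-\delta(\mathbb{U}^{\Omega}_j,\mathbb{U}^A_j)$ if $B_j>\mathbb{U}^{\Omega}_j>\mathbb{U}^A_j$; (2) $\delta(B_j,\mathbb{L}^A_j)-\delta(\mathbb{L}^{\Omega}_j,\mathbb{L}^A_j)$ if $B_j<\mathbb{L}^{\Omega}_j<\mathbb{L}^A_j$; (3) $\delta(B_j,\mathbb{U}^{\Omega}_j)$ if $B_j>\mathbb{U}^{\Omega}_j$ and $\mathbb{U}^{\Omega}_j\le\mathbb{U}^A_j$; (4) $\delta(B_j,\mathbb{L}^{\Omega}_j)$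 if $B_j<\mathbb{L}^{\Omega}_j$ and $\mathbb{L}^{\Omega}_j\ge\mathbb{L}^A_j$; (5) $0$ otherwise. Then $\mathrm{LB\_Petitjean}_w(A,B)\le \mathrm{DTW}_w(A,B)$.
   Context: A warping path of $A$ and $B$ is a sequence of pairs $(i_1,j_1),\dots,(i_P,j_P)$ with $(i_1,j_1)=(1,1)$, $(i_P,j_P)=(\ell,\ell)$, and for each $1<k\le P$, $(i_{k-1},j_{k-1})\in\{(i_k-1,j_k),(i_k,j_k-1),(i_k-1,j_k-1)\}$. $\mathrm{DTW}_w(A,B)$ is the minimum of $\sum_{k=1}^P\delta(A_{i_k},B_{j_k})$ over all warping paths all of whose pairs satisfy $i_k-w\le j_k\le i_k+w$. For a real sequence $S$ of length $\ell$, its upper and lower envelopes with window $w$ are $\mathbb{U}^S_i=\max_{\max(1,i-w)\le j\le\min(\ell,i+w)}S_j$ and $\mathbb{L}^S_i=\min_{\max(1,i-w)\le j\le\min(\ell,i+w)}S_j$. The projection $\Omega=\Omega_w(A,B)$ is the sequence with $\Omega_i=\mathbb{U}^B_i$ if $A_i>\mathbb{U}^B_i$, $\Omega_i=\mathbb{L}^B_i$ if $A_i<\mathbb{L}^B_i$, and $\Omega_i=A_i$ otherwise; $\mathbb{U}^{\Omega},\mathbb{L}^{\Omega}$ are its envelopes with window $w$. Writing $\delta_{i,j}=\delta(A_i,B_j)$, $\mathrm{minlrpaths}(A,B)=\delta_{1,1}+\delta_{\ell,\ell}+\min[\delta_{1,2}+\delta_{1,3},\ \delta_{1,2}+\delta_{2,3},\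 \delta_{2,2}+\delta_{2,3},\ \delta_{2,2}+\delta_{3,3},\ \delta_{2,2}+\delta_{3,2},\ \delta_{2,1}+\delta_{3,2},\ \delta_{2,1}+\delta_{3,1}]+\min[\delta_{\ell,\ell-1}+\delta_{\ell,\ell-2},\ \delta_{\ell,\ell-1}+\delta_{\ell-1,\ell-2},\ \delta_{\ell-1,\ell-1}+\delta_{\ell-1,\ell-2},\ \delta_{\ell-1,\ell-1}+\delta_{\ell-2,\ell-2},\ \delta_{\ell-1,\ell-1}+\delta_{\ell-2,\ell-1},\ \delta_{\ell-1,\ell}+\delta_{\ell-2,\ell-1},\ \delta_{\ell-1,\ell}+\delta_{\ell-2,\ell}]$. *)

theory Defs
  imports Main "HOL.Real"
begin

text \<open>Sequences of length l are functions nat => real, indexed 1..l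
  (values outside 1..l are irrelevant).  A warping path is a nonempty list of index pairs.\<close>

definition warping_path :: "nat \<Rightarrow> nat \<Rightarrow> (nat \<times> nat) list \<Rightarrow> bool" where
  "warping_path l w p \<longleftrightarrow> p \<noteq> [] \<and> hd p = (1,1) \<and> last p = (l,l) \<and>
     (\<forall>k. 0 < k \<and> k < length p \<longrightarrow>
        (let (i,j) = p ! k in p ! (k-1) \<in> {(i-1,j),(i,j-1),(i-1,j-1)} \<and> 1 \<le> i \<and> 1 \<le> j)) \<and>
     (\<forall>k < length p. let (i,j) = p ! k in int i - int w \<le> int j \<and> int j \<le> int i + int w)"

definition path_cost :: "(real \<Rightarrow> real \<Rightarrow> real) \<Rightarrow> (nat \<Rightarrow> real) \<Rightarrow> (nat \<Rightarrow> real)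
    \<Rightarrow> (nat \<times> nat) list \<Rightarrow> real" where
  "path_cost \<delta> A B p = (\<Sum>k<length p. \<delta> (A (fst (p ! k))) (B (snd (p ! k))))"

definition DTW :: "(real \<Rightarrow> real \<Rightarrow> real) \<Rightarrow> nat \<Rightarrow> nat \<Rightarrow> (nat \<Rightarrow> real) \<Rightarrow> (nat \<Rightarrow> real) \<Rightarrow> real" where
  "DTW \<delta> l w A B = Inf {path_cost \<delta> A B p | p. warping_path l w p}"

definition upper_env :: "nat \<Rightarrow> nat \<Rightarrow> (nat \<Rightarrow> real) \<Rightarrow> nat \<Rightarrow> real" where
  "upper_env l w S i = Max {S j | j. max 1 (int i - int w) \<le> int j \<and> j \<le> min l (i + w)}"

definition lower_env :: "nat \<Rightarrow> nat \<Rightarrow> (nat \<Rightarrow> real) \<Rightarrow> nat \<Rightarrow> real" where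
  "lower_env l w S i = Min {S j | j. max 1 (int i - int w) \<le> int j \<and> j \<le> min l (i + w)}"

definition proj :: "nat \<Rightarrow> nat \<Rightarrow> (nat \<Rightarrow> real) \<Rightarrow> (nat \<Rightarrow> real) \<Rightarrow> nat \<Rightarrow> real" where
  "proj l w A B i = (if A i > upper_env l w B i then upper_env l w B i
                     else if A i < lower_env l w B i then lower_env l w B i else A i)"

definition minlrpaths :: "(real \<Rightarrow> real \<Rightarrow> real) \<Rightarrow> nat \<Rightarrow> (nat \<Rightarrow> real) \<Rightarrow> (nat \<Rightarrow> real) \<Rightarrow> real" where
  "minlrpaths \<delta> l A B = (let d = (\<lambda>i j. \<delta> (A i) (B j)) in
     d 1 1 + d l l
     + Min {d 1 2 + d 1 3, d 1 2 + d 2 3, d 2 2 + d 2 3, d 2 2 + d 3 3,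
            d 2 2 + d 3 2, d 2 1 + d 3 2, d 2 1 + d 3 1}
     + Min {d l (l-1) + d l (l-2), d l (l-1) + d (l-1) (l-2),
            d (l-1) (l-1) + d (l-1) (l-2), d (l-1) (l-1) + d (l-2) (l-2),
            d (l-1) (l-1) + d (l-2) (l-1), d (l-1) l + d (l-2) (l-1),
            d (l-1) l + d (l-2) l})"

definition kappa :: "(real \<Rightarrow> real \<Rightarrow> real) \<Rightarrow> nat \<Rightarrow> nat \<Rightarrow> (nat \<Rightarrow> real) \<Rightarrow> (nat \<Rightarrow> real) \<Rightarrow> nat \<Rightarrow> real" where
  "kappa \<delta> l w A B i = (if A i > upper_env l w B i then \<delta> (A i) (upper_env l w B i)
     else if A i < lower_env l w B i then \<delta> (A i) (lower_env l w B i) else 0)"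

definition beta :: "(real \<Rightarrow> real \<Rightarrow> real) \<Rightarrow> nat \<Rightarrow> nat \<Rightarrow> (nat \<Rightarrow> real) \<Rightarrow> (nat \<Rightarrow> real) \<Rightarrow> nat \<Rightarrow> real" where
  "beta \<delta> l w A B j = (let Om = proj l w A B; UO = upper_env l w Om j; LO = lower_env l w Om j;
        UA = upper_env l w A j; LA = lower_env l w A j in
     if B j > UO \<and> UO > UA then \<delta> (B j) UA - \<delta> UO UA
     else if B j < LO \<and> LO < LA then \<delta> (B j) LA - \<delta> LO LA
     else if B j > UO \<and> UO \<le> UA then \<delta> (B j) UO
     else if B j < LO \<and> LO \<ge> LA then \<delta> (B j) LO
     else 0)"

definition LB_Petitjean :: "(real \<Rightarrow> real \<Rightarrow> real) \<Rightarrow> nat \<Rightarrow> nat \<Rightarrow> (nat \<Rightarrow> real) \<Rightarrow> (nat \<Rightarrow> real) \<Rightarrow> real" where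
  "LB_Petitjean \<delta> l w A B = minlrpaths \<delta> l A B + (\<Sum>i=4..l-3. kappa \<delta> l w A B i)
     + (\<Sum>j=4..l-3. beta \<delta> l w A B j)"

end

theory Submission
  imports Defs
begin

(* Every cell (i, j) of a warping path lies in the window, so B_j lies between the envelopes of B
   around i, and A_i, Omega_i lie between the envelopes of A and Omega around j.  Then
   kappa_i = delta(A_i, Omega_i), and since Omega_i lies between A_i and B_j, the quadrangle
   inequality splits delta(A_i, B_j) into kappa_i plus a remainder that dominates beta_j.
   A warping path visits every row and every column, and no cell in a row or column 4..l-3 lies
   in one of the corners {1..3}^2, {l-2..l}^2; so the cells outside the corners pay for both sums.
   In the corner {1..3}^2 the path passes through (1,1) and then through one of the seven pairs of
   cells in minlrpaths; the corner {l-2..l}^2 is the same situation for the path reflected by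
   (i, j) |-> (l+1-i, l+1-j). *)

definition succ_cells :: "nat \<times> nat \<Rightarrow> (nat \<times> nat) set" where
  "succ_cells = (\<lambda>(i, j). {(Suc i, j), (i, Suc j), (Suc i, Suc j)})"

lemma warping_path_iff:
  "warping_path l w p \<longleftrightarrow> p \<noteq> [] \<and> p ! 0 = (1, 1) \<and> p ! (length p - 1) = (l, l) \<and>
     (\<forall>k. Suc k < length p \<longrightarrow> p ! Suc k \<in> succ_cells (p ! k)) \<and>
     (\<forall>(i, j) \<in> set p. 1 \<le> i \<and> 1 \<le> j \<and> i \<le> j + w \<and> j \<le> i + w)"
proof -
  have all_Suc_less_iff: "(\<forall>k. 0 < k \<and> k < n \<longrightarrow> Q k) \<longleftrightarrow> (\<forall>k. Suc k < n \<longrightarrow> Q (Suc k))"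
    for n and Q :: "nat \<Rightarrow> bool"
    by (metis gr0_conv_Suc zero_less_Suc)
  have step: "(let (i, j) = p ! Suc k in p ! k \<in> {(i-1,j),(i,j-1),(i-1,j-1)} \<and> 1 \<le> i \<and> 1 \<le> j)
      \<longleftrightarrow> p ! Suc k \<in> succ_cells (p ! k) \<and> 1 \<le> fst (p ! Suc k) \<and> 1 \<le> snd (p ! Suc k)" for k
    by (cases "p ! Suc k"; cases "p ! k") (auto simp: succ_cells_def)
  have steps: "(\<forall>k. 0 < k \<and> k < length p \<longrightarrow>
        (let (i,j) = p ! k in p ! (k-1) \<in> {(i-1,j),(i,j-1),(i-1,j-1)} \<and> 1 \<le> i \<and> 1 \<le> j))
      \<longleftrightarrow> (\<forall>k. Suc k < length p \<longrightarrow> p ! Suc k \<in> succ_cells (p ! k) \<and>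
             1 \<le> fst (p ! Suc k) \<and> 1 \<le> snd (p ! Suc k))"
    by (simp only: all_Suc_less_iff diff_Suc_1 step)
  have window: "(\<forall>k < length p. let (i,j) = p ! k in int i - int w \<le> int j \<and> int j \<le> int i + int w)
      \<longleftrightarrow> (\<forall>(i, j) \<in> set p. i \<le> j + w \<and> j \<le> i + w)"
    by (simp add: all_set_conv_all_nth case_prod_beta diff_le_eq flip: of_nat_add)
  have pos: "(\<forall>k. Suc k < length p \<longrightarrow> 1 \<le> fst (p ! Suc k) \<and> 1 \<le> snd (p ! Suc k))
      \<longleftrightarrow> (\<forall>(i, j) \<in> set p. 1 \<le> i \<and> 1 \<le> j)" if "p ! 0 = (1, 1)"
  proof -
    have "(\<forall>(i, j) \<in> set p. 1 \<le> i \<and> 1 \<le> j) \<longleftrightarrow> (\<forall>k < length p. 1 \<le> fst (p ! k) \<and> 1 \<le> snd (p ! k))"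
      by (simp add: all_set_conv_all_nth case_prod_beta)
    also have "\<dots> \<longleftrightarrow> (\<forall>k. Suc k < length p \<longrightarrow> 1 \<le> fst (p ! Suc k) \<and> 1 \<le> snd (p ! Suc k))"
      using that by (metis fst_conv snd_conv le_refl not0_implies_Suc)
    finally show ?thesis ..
  qed
  show ?thesis
  proof (cases "p = []")
    case False
    then show ?thesis
      unfolding warping_path_def steps window hd_conv_nth[OF False] last_conv_nth[OF False]
      using pos by blast
  qed (simp add: warping_path_def)
qed

lemma warping_path_nth_Suc:
  assumes "warping_path l w p" "Suc k < length p"
  shows "p ! Suc k \<in> succ_cells (p ! k)"
  using assms by (simp add: warping_path_iff)

lemma warping_path_Suc_less:
  assumes "warping_path l w p" "k < length p" "p ! k \<noteq> (l, l)"
  shows "Suc k < length p"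
  using assms by (metis Suc_lessI diff_Suc_1 warping_path_iff)

lemma warping_path_window:
  assumes "warping_path l w p" "k < length p"
  shows "fst (p ! k) \<le> snd (p ! k) + w" "snd (p ! k) \<le> fst (p ! k) + w"
  using assms nth_mem[OF assms(2)] by (auto simp: warping_path_iff)

lemma warping_path_mono:
  assumes "warping_path l w p" "k \<le> k'" "k' < length p"
  shows "fst (p ! k) \<le> fst (p ! k') \<and> snd (p ! k) \<le> snd (p ! k')"
  using assms(2,3)
proof (induction k' rule: dec_induct)
  case (step m)
  then have "p ! Suc m \<in> succ_cells (p ! m)"
    using warping_path_nth_Suc[OF assms(1)] by simp
  with step show ?case
    by (auto simp: succ_cells_def split: prod.splits)
qed simp

lemma warping_path_in_grid:
  assumes "warping_path l w p" "k < length p"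
  shows "p ! k \<in> {1..l} \<times> {1..l}"
proof -
  have "p ! 0 = (1, 1)" "p ! (length p - 1) = (l, l)"
    using assms(1) by (simp_all add: warping_path_iff)
  then show ?thesis
    using warping_path_mono[OF assms(1), of 0 k] warping_path_mono[OF assms(1), of k "length p - 1"]
      assms(2)
    by (cases "p ! k") auto
qed

lemma warping_path_visits:
  assumes "warping_path l w p" "i \<in> {1..l}"
  shows "\<exists>k < length p. fst (p ! k) = i" "\<exists>k < length p. snd (p ! k) = i"
proof -
  let ?n = "length p - 1"
  have ends: "p \<noteq> []" "p ! 0 = (1, 1)" "p ! ?n = (l, l)"
    using assms(1) by (simp_all add: warping_path_iff)
  have steps: "\<bar>int (fst (p ! (k + 1))) - int (fst (p ! k))\<bar> \<le> 1 \<and>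
      \<bar>int (snd (p ! (k + 1))) - int (snd (p ! k))\<bar> \<le> 1" if "k < ?n" for k
    using warping_path_nth_Suc[OF assms(1), of k] that
    by (cases "p ! k") (auto simp: succ_cells_def less_diff_conv)
  show "\<exists>k < length p. fst (p ! k) = i"
    using nat0_intermed_int_val[of ?n "\<lambda>k. int (fst (p ! k))" "int i"] steps ends assms(2)
    by (auto simp: le_diff_conv2 Suc_le_eq)
  show "\<exists>k < length p. snd (p ! k) = i"
    using nat0_intermed_int_val[of ?n "\<lambda>k. int (snd (p ! k))" "int i"] steps ends assms(2)
    by (auto simp: le_diff_conv2 Suc_le_eq)
qed

lemma warping_path_diagonal: "1 \<le> l \<Longrightarrow> warping_path l w (map (\<lambda>i. (i, i)) [1..<Suc l])"
  by (auto simp: warping_path_iff succ_cells_def nth_append)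

definition reflect_cell :: "nat \<Rightarrow> nat \<times> nat \<Rightarrow> nat \<times> nat" where
  "reflect_cell l = (\<lambda>(i, j). (Suc l - i, Suc l - j))"

lemma reflect_cell_reflect_cell:
  "c \<in> {1..l} \<times> {1..l} \<Longrightarrow> reflect_cell l (reflect_cell l c) = c"
  by (auto simp: reflect_cell_def)

lemma reflect_cell_succ_cells:
  "c' \<in> succ_cells c \<Longrightarrow> c' \<in> {1..l} \<times> {1..l} \<Longrightarrow>
    reflect_cell l c \<in> succ_cells (reflect_cell l c')"
  by (cases c) (auto simp: succ_cells_def reflect_cell_def Suc_diff_le)

lemma warping_path_reflect:
  assumes wp: "warping_path l w p"
  shows "warping_path l w (rev (map (reflect_cell l) p))" (is "warping_path l w ?q")
  unfolding warping_path_iff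
proof (intro conjI allI impI ballI)
  have ends: "p \<noteq> []" "p ! 0 = (1, 1)" "p ! (length p - 1) = (l, l)"
    using wp by (simp_all add: warping_path_iff)
  then show "?q \<noteq> []" "?q ! 0 = (1, 1)" "?q ! (length ?q - 1) = (l, l)"
    by (simp_all add: rev_nth reflect_cell_def)
next
  fix k assume k: "Suc k < length ?q"
  define m where "m = length p - Suc (Suc k)"
  have "p ! Suc m \<in> succ_cells (p ! m)" "p ! Suc m \<in> {1..l} \<times> {1..l}"
    using k warping_path_nth_Suc[OF wp] warping_path_in_grid[OF wp] by (simp_all add: m_def)
  moreover have "?q ! k = reflect_cell l (p ! Suc m)" "?q ! Suc k = reflect_cell l (p ! m)"
    using k by (simp_all add: rev_nth m_def Suc_diff_Suc)
  ultimately show "?q ! Suc k \<in> succ_cells (?q ! k)"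
    by (simp add: reflect_cell_succ_cells)
next
  fix c assume "c \<in> set ?q"
  then obtain k where k: "k < length p" "c = reflect_cell l (p ! k)"
    by (auto simp: in_set_conv_nth)
  then show "case c of (i, j) \<Rightarrow> 1 \<le> i \<and> 1 \<le> j \<and> i \<le> j + w \<and> j \<le> i + w"
    using warping_path_in_grid[OF wp k(1)] warping_path_window[OF wp k(1)]
    by (cases "p ! k") (auto simp: reflect_cell_def)
qed

definition start_moves :: "((nat \<times> nat) \<times> (nat \<times> nat)) set" where
  "start_moves = {((1,2),(1,3)), ((1,2),(2,3)), ((2,2),(2,3)), ((2,2),(3,3)),
     ((2,2),(3,2)), ((2,1),(3,2)), ((2,1),(3,1))}"

lemma warping_path_start_move:
  assumes "3 \<le> l" "warping_path l w p"
  shows "\<exists>a b. 0 < a \<and> a < b \<and> b < length p \<and> (p ! a, p ! b) \<in> start_moves"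
proof -
  have "p ! 0 = (1, 1)" "0 < length p"
    using assms(2) by (simp_all add: warping_path_iff)
  then have len1: "1 < length p"
    using assms(1) warping_path_Suc_less[OF assms(2), of 0] by simp
  have c1: "p ! 1 \<in> {(2, 1), (1, 2), (2, 2)}"
    using warping_path_nth_Suc[OF assms(2), of 0] len1 \<open>p ! 0 = (1, 1)\<close>
    by (simp add: succ_cells_def numeral_2_eq_2)
  then have len2: "2 < length p"
    using assms(1) len1 warping_path_Suc_less[OF assms(2), of 1] by auto
  have c2: "p ! 2 \<in> succ_cells (p ! 1)"
    using warping_path_nth_Suc[OF assms(2), of 1] len2 by (simp add: numeral_2_eq_2)
  show ?thesis
  proof (cases "(p ! 1, p ! 2) \<in> start_moves")
    case True
    with len2 show ?thesis by (intro exI[of _ 1] exI[of _ 2]) simp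
  next
    case False
    with c1 c2 have c2': "p ! 2 = (2, 2)"
      by (auto simp: succ_cells_def start_moves_def)
    then have len3: "3 < length p"
      using assms(1) len2 warping_path_Suc_less[OF assms(2), of 2] by simp
    then have "p ! 3 \<in> succ_cells (2, 2)"
      using c2' warping_path_nth_Suc[OF assms(2), of 2] by (simp add: numeral_3_eq_3)
    with c2' len3 show ?thesis
      by (intro exI[of _ 2] exI[of _ 3]) (auto simp: succ_cells_def start_moves_def)
  qed
qed

lemma start_move_le_sum:
  fixes h :: "nat \<times> nat \<Rightarrow> real"
  assumes "3 \<le> l" "warping_path l w p" "\<And>c. 0 \<le> h c"
  shows "h (1, 1) + Min ((\<lambda>(c, d). h c + h d) ` start_moves)
    \<le> (\<Sum>k | k < length p \<and> p ! k \<in> {..3} \<times> {..3}. h (p ! k))"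
proof -
  obtain a b where ab: "0 < a" "a < b" "b < length p" "(p ! a, p ! b) \<in> start_moves"
    using warping_path_start_move[OF assms(1,2)] by blast
  have "p ! 0 = (1, 1)"
    using assms(2) by (simp add: warping_path_iff)
  have "Min ((\<lambda>(c, d). h c + h d) ` start_moves) \<le> h (p ! a) + h (p ! b)"
    using ab(4) by (intro Min_le) (auto simp: start_moves_def)
  also have "h (1, 1) + (h (p ! a) + h (p ! b)) = (\<Sum>k\<in>{0, a, b}. h (p ! k))"
    using ab \<open>p ! 0 = (1, 1)\<close> by simp
  also have "\<dots> \<le> (\<Sum>k | k < length p \<and> p ! k \<in> {..3} \<times> {..3}. h (p ! k))"
    using ab \<open>p ! 0 = (1, 1)\<close> assms(3)
    by (intro sum_mono2) (auto simp: start_moves_def)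
  finally show ?thesis by simp
qed

lemma end_move_le_sum:
  fixes h :: "nat \<times> nat \<Rightarrow> real"
  assumes "3 \<le> l" "warping_path l w p" "\<And>c. 0 \<le> h c"
  shows "h (l, l) + Min ((\<lambda>(c, d). h (reflect_cell l c) + h (reflect_cell l d)) ` start_moves)
    \<le> (\<Sum>k | k < length p \<and> p ! k \<in> {l-2..} \<times> {l-2..}. h (p ! k))"
proof -
  let ?q = "rev (map (reflect_cell l) p)"
  let ?h = "h \<circ> reflect_cell l"
  have "h (l, l) + Min ((\<lambda>(c, d). h (reflect_cell l c) + h (reflect_cell l d)) ` start_moves)
      = ?h (1, 1) + Min ((\<lambda>(c, d). ?h c + ?h d) ` start_moves)"
    by (simp add: reflect_cell_def)
  also have "\<dots> \<le> (\<Sum>k | k < length ?q \<and> ?q ! k \<in> {..3} \<times> {..3}. ?h (?q ! k))"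
    using assms warping_path_reflect by (intro start_move_le_sum) auto
  also have "\<dots> = (\<Sum>k<length p. if ?q ! k \<in> {..3} \<times> {..3} then ?h (?q ! k) else 0)"
    by (simp add: sum.inter_filter[symmetric])
  also have "\<dots> = (\<Sum>k<length p. if p ! (length p - Suc k) \<in> {l-2..} \<times> {l-2..}
      then h (p ! (length p - Suc k)) else 0)"
  proof (rule sum.cong)
    fix k assume "k \<in> {..<length p}"
    moreover have "reflect_cell l c \<in> {..3} \<times> {..3} \<longleftrightarrow> c \<in> {l-2..} \<times> {l-2..}"
      if "c \<in> {1..l} \<times> {1..l}" for c
      using that assms(1) by (auto simp: reflect_cell_def)
    ultimately show "(if ?q ! k \<in> {..3} \<times> {..3} then ?h (?q ! k) else 0) =
        (if p ! (length p - Suc k) \<in> {l-2..} \<times> {l-2..} then h (p ! (length p - Suc k)) else 0)"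
      using warping_path_in_grid[OF assms(2), of "length p - Suc k"]
      by (simp add: rev_nth reflect_cell_reflect_cell)
  qed simp
  also have "\<dots> = (\<Sum>k<length p. if p ! k \<in> {l-2..} \<times> {l-2..} then h (p ! k) else 0)"
    by (rule sum.nat_diff_reindex)
  also have "\<dots> = (\<Sum>k | k < length p \<and> p ! k \<in> {l-2..} \<times> {l-2..}. h (p ! k))"
    by (simp add: sum.inter_filter[symmetric])
  finally show ?thesis .
qed

definition cell_cost ::
    "(real \<Rightarrow> real \<Rightarrow> real) \<Rightarrow> (nat \<Rightarrow> real) \<Rightarrow> (nat \<Rightarrow> real) \<Rightarrow> nat \<times> nat \<Rightarrow> real" where
  "cell_cost \<delta> A B c = \<delta> (A (fst c)) (B (snd c))"

lemma path_cost_eq_sum_cell_cost: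
  "path_cost \<delta> A B p = (\<Sum>k<length p. cell_cost \<delta> A B (p ! k))"
  by (simp add: path_cost_def cell_cost_def)

lemma minlrpaths_eq:
  assumes "3 \<le> l"
  shows "minlrpaths \<delta> l A B = cell_cost \<delta> A B (1, 1) + cell_cost \<delta> A B (l, l)
    + Min ((\<lambda>(c, d). cell_cost \<delta> A B c + cell_cost \<delta> A B d) ` start_moves)
    + Min ((\<lambda>(c, d). cell_cost \<delta> A B (reflect_cell l c) + cell_cost \<delta> A B (reflect_cell l d))
        ` start_moves)"
proof -
  have "Suc l - 1 = l" "Suc l - 2 = l - 1" "Suc l - 3 = l - 2"
    using assms by simp_all
  then show ?thesis
    by (simp only: minlrpaths_def Let_def cell_cost_def start_moves_def reflect_cell_def
        image_insert image_empty prod.case fst_conv snd_conv diff_Suc_1)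
qed

lemma envelope_bounds:
  assumes "1 \<le> j" "j \<le> l" "i \<le> j + w" "j \<le> i + w"
  shows "lower_env l w S i \<le> S j" "S j \<le> upper_env l w S i"
proof -
  let ?W = "{j. max 1 (int i - int w) \<le> int j \<and> j \<le> min l (i + w)}"
  have "{S j | j. max 1 (int i - int w) \<le> int j \<and> j \<le> min l (i + w)} = S ` ?W"
    by auto
  moreover have "finite ?W"
    by (rule finite_subset[of _ "{..l}"]) auto
  moreover have "j \<in> ?W"
    using assms by auto
  ultimately show "lower_env l w S i \<le> S j" "S j \<le> upper_env l w S i"
    unfolding lower_env_def upper_env_def by simp_all
qed

lemma proj_between:
  assumes "lower_env l w B i \<le> b" "b \<le> upper_env l w B i"
  shows "A i \<le> proj l w A B i \<and> proj l w A B i \<le> b \<or> b \<le> proj l w A B i \<and> proj l w A B i \<le> A i"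
  using assms by (auto simp: proj_def)

lemma sum_le_sum_comp_if_subset_image:
  fixes h :: "'a \<Rightarrow> 'b::ordered_comm_monoid_add"
  assumes "finite M" "R \<subseteq> f ` M" "\<And>x. 0 \<le> h x"
  shows "sum h R \<le> (\<Sum>k\<in>M. h (f k))"
proof -
  have "sum h R \<le> sum h (f ` M)"
    using assms by (intro sum_mono2) auto
  also have "\<dots> \<le> (\<Sum>k\<in>M. h (f k))"
    using sum_image_le[OF assms(1), of h f] assms(3) by (simp add: comp_def)
  finally show ?thesis .
qed

locale dtw_cost =
  fixes \<delta> :: "real \<Rightarrow> real \<Rightarrow> real"
  assumes cost_nonneg: "\<And>a b. \<delta> a b \<ge> 0"
    and cost_sym: "\<And>a b. \<delta> a b = \<delta> b a"
    and cost_self: "\<And>a. \<delta> a a = 0"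
    and cost_quadrangle: "\<And>a b x y. (a \<le> x \<and> x \<le> y \<and> y \<le> b) \<or> (a \<ge> x \<and> x \<ge> y \<and> y \<ge> b) \<Longrightarrow>
           \<delta> a b \<ge> \<delta> a y + \<delta> b x - \<delta> x y"
begin

lemma cost_split:
  "a \<le> x \<and> x \<le> b \<or> b \<le> x \<and> x \<le> a \<Longrightarrow> \<delta> a x + \<delta> x b \<le> \<delta> a b"
  using cost_quadrangle[of a x x b] cost_self[of x] cost_sym[of b x] by auto

lemma cost_mono:
  "a \<le> x \<and> x \<le> y \<or> y \<le> x \<and> x \<le> a \<Longrightarrow> \<delta> a x \<le> \<delta> a y"
  using cost_split[of a x y] cost_nonneg[of x y] by linarith

lemma kappa_eq_proj: "kappa \<delta> l w A B i = \<delta> (A i) (proj l w A B i)"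
  by (simp add: kappa_def proj_def cost_self)

lemma kappa_nonneg: "0 \<le> kappa \<delta> l w A B i"
  by (simp add: kappa_eq_proj cost_nonneg)

lemma beta_nonneg: "0 \<le> beta \<delta> l w A B j"
proof -
  have "0 \<le> \<delta> b x - \<delta> y x" if "x < y \<and> y < b \<or> b < y \<and> y < x" for b x y
    using cost_split[of b y x] cost_nonneg[of b y] that by auto
  then show ?thesis
    by (auto simp: beta_def Let_def cost_nonneg)
qed

lemma proj_cost_plus_beta_le:
  assumes a: "LA \<le> a" "a \<le> UA" and \<omega>: "LO \<le> \<omega>" "\<omega> \<le> UO"
    and between: "a \<le> \<omega> \<and> \<omega> \<le> b \<or> b \<le> \<omega> \<and> \<omega> \<le> a"
  shows "\<delta> a \<omega> + (if UO < b then if UA < UO then \<delta> b UA - \<delta> UO UA else \<delta> b UO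
      else if b < LO then if LO < LA then \<delta> b LA - \<delta> LO LA else \<delta> b LO else 0) \<le> \<delta> a b"
proof -
  have split_ab: "\<delta> a \<omega> + \<delta> \<omega> b \<le> \<delta> a b"
    using cost_split between by blast
  show ?thesis
  proof (cases "UO < b")
    case above: True
    show ?thesis
    proof (cases "UA < UO")
      case True
      with a \<omega> above between have "\<delta> a \<omega> \<le> \<delta> a UO"
        by (intro cost_mono) linarith
      moreover have "\<delta> a UO + \<delta> b UA - \<delta> UA UO \<le> \<delta> a b"
        using cost_quadrangle[of a UA UO b] a True above by linarith
      ultimately show ?thesis
        using above True cost_sym[of UO UA] by simp
    next
      case False
      have "\<delta> b UO \<le> \<delta> b \<omega>"
        using cost_mono[of b UO \<omega>] \<omega> above by linarith
      then show ?thesis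
        using above False split_ab cost_sym[of \<omega> b] by simp
    qed
  next
    case not_above: False
    show ?thesis
    proof (cases "b < LO")
      case below: True
      show ?thesis
      proof (cases "LO < LA")
        case True
        with a \<omega> below between have "\<delta> a \<omega> \<le> \<delta> a LO"
          by (intro cost_mono) linarith
        moreover have "\<delta> a LO + \<delta> b LA - \<delta> LA LO \<le> \<delta> a b"
          using cost_quadrangle[of a LA LO b] a True below by linarith
        ultimately show ?thesis
          using not_above below True cost_sym[of LO LA] by simp
      next
        case False
        have "\<delta> b LO \<le> \<delta> b \<omega>"
          using cost_mono[of b LO \<omega>] \<omega> below by linarith
        then show ?thesis
          using not_above below False split_ab cost_sym[of \<omega> b] by simp
      qed
    next
      case False
      then show ?thesis
        using not_above split_ab cost_nonneg[of \<omega> b] by simp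
    qed
  qed
qed

lemma kappa_plus_beta_le_cost:
  assumes "1 \<le> i" "i \<le> l" "1 \<le> j" "j \<le> l" "i \<le> j + w" "j \<le> i + w"
  shows "kappa \<delta> l w A B i + beta \<delta> l w A B j \<le> \<delta> (A i) (B j)"
proof -
  let ?\<Omega> = "proj l w A B"
  define UO LO UA LA
    where "UO = upper_env l w ?\<Omega> j" and "LO = lower_env l w ?\<Omega> j"
      and "UA = upper_env l w A j" and "LA = lower_env l w A j"
  have a: "LA \<le> A i" "A i \<le> UA" and \<omega>: "LO \<le> ?\<Omega> i" "?\<Omega> i \<le> UO"
    unfolding UO_def LO_def UA_def LA_def using envelope_bounds[of i l j w] assms by simp_all
  have "A i \<le> ?\<Omega> i \<and> ?\<Omega> i \<le> B j \<or> B j \<le> ?\<Omega> i \<and> ?\<Omega> i \<le> A i"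
    using proj_between envelope_bounds[of j l i w B] assms by simp
  \<comment> \<open>cases (3) and (4) of beta need no side condition once (1) and (2) fail, and (1) and (2)
    exclude each other because LO \<le> UO\<close>
  moreover have "beta \<delta> l w A B j = (if UO < B j
      then if UA < UO then \<delta> (B j) UA - \<delta> UO UA else \<delta> (B j) UO
      else if B j < LO then if LO < LA then \<delta> (B j) LA - \<delta> LO LA else \<delta> (B j) LO else 0)"
    using \<omega> unfolding beta_def Let_def UO_def LO_def UA_def LA_def by auto
  ultimately show ?thesis
    using proj_cost_plus_beta_le[OF a \<omega>] by (simp add: kappa_eq_proj)
qed

lemma sum_kappa_beta_le_sum_cell_cost:
  assumes wp: "warping_path l w p" and R: "R \<subseteq> {1..l}" and M: "M \<subseteq> {..<length p}"
    and covers: "\<And>k. k < length p \<Longrightarrow> fst (p ! k) \<in> R \<or> snd (p ! k) \<in> R \<Longrightarrow> k \<in> M"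
  shows "(\<Sum>i\<in>R. kappa \<delta> l w A B i) + (\<Sum>j\<in>R. beta \<delta> l w A B j) \<le> (\<Sum>k\<in>M. cell_cost \<delta> A B (p ! k))"
proof -
  have "finite M"
    using M finite_subset by blast
  have rows: "R \<subseteq> (\<lambda>k. fst (p ! k)) ` M"
  proof
    fix i assume "i \<in> R"
    then obtain k where "k < length p" "fst (p ! k) = i"
      using warping_path_visits(1)[OF wp] R by blast
    with covers \<open>i \<in> R\<close> show "i \<in> (\<lambda>k. fst (p ! k)) ` M" by force
  qed
  have cols: "R \<subseteq> (\<lambda>k. snd (p ! k)) ` M"
  proof
    fix j assume "j \<in> R"
    then obtain k where "k < length p" "snd (p ! k) = j"
      using warping_path_visits(2)[OF wp] R by blast
    with covers \<open>j \<in> R\<close> show "j \<in> (\<lambda>k. snd (p ! k)) ` M" by force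
  qed
  have "(\<Sum>i\<in>R. kappa \<delta> l w A B i) \<le> (\<Sum>k\<in>M. kappa \<delta> l w A B (fst (p ! k)))"
    by (rule sum_le_sum_comp_if_subset_image[OF \<open>finite M\<close> rows kappa_nonneg])
  moreover have "(\<Sum>j\<in>R. beta \<delta> l w A B j) \<le> (\<Sum>k\<in>M. beta \<delta> l w A B (snd (p ! k)))"
    by (rule sum_le_sum_comp_if_subset_image[OF \<open>finite M\<close> cols beta_nonneg])
  moreover have "(\<Sum>k\<in>M. kappa \<delta> l w A B (fst (p ! k)) + beta \<delta> l w A B (snd (p ! k)))
      \<le> (\<Sum>k\<in>M. cell_cost \<delta> A B (p ! k))"
  proof (rule sum_mono)
    fix k assume "k \<in> M"
    with M have "k < length p" by blast
    then show "kappa \<delta> l w A B (fst (p ! k)) + beta \<delta> l w A B (snd (p ! k))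
        \<le> cell_cost \<delta> A B (p ! k)"
      using warping_path_in_grid[OF wp] warping_path_window[OF wp]
      by (simp add: kappa_plus_beta_le_cost cell_cost_def mem_Times_iff)
  qed
  ultimately show ?thesis
    by (simp add: sum.distrib)
qed

lemma LB_Petitjean_le_path_cost:
  assumes l: "6 \<le> l" and wp: "warping_path l w p"
  shows "LB_Petitjean \<delta> l w A B \<le> path_cost \<delta> A B p"
proof -
  have l3: "3 \<le> l"
    using l by simp
  let ?c = "\<lambda>k. cell_cost \<delta> A B (p ! k)"
  define F where "F = {k. k < length p \<and> p ! k \<in> {..3} \<times> {..3}}"
  define E where "E = {k. k < length p \<and> p ! k \<in> {l-2..} \<times> {l-2..}}"
  define M where "M = {..<length p} - (F \<union> E)"
  have FE: "F \<union> E \<subseteq> {..<length p}" "finite F" "finite E" "F \<inter> E = {}"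
    using l by (auto simp: F_def E_def)
  have "path_cost \<delta> A B p = sum ?c (F \<union> E) + sum ?c M"
    unfolding path_cost_eq_sum_cell_cost M_def by (simp add: sum.subset_diff[OF FE(1)] add.commute)
  also have "sum ?c (F \<union> E) = sum ?c F + sum ?c E"
    using FE by (simp add: sum.union_disjoint)
  finally have "path_cost \<delta> A B p = sum ?c F + sum ?c E + sum ?c M" .
  moreover have "cell_cost \<delta> A B (1, 1)
      + Min ((\<lambda>(c, d). cell_cost \<delta> A B c + cell_cost \<delta> A B d) ` start_moves) \<le> sum ?c F"
    unfolding F_def by (intro start_move_le_sum[OF l3 wp]) (auto simp: cell_cost_def cost_nonneg)
  moreover have "cell_cost \<delta> A B (l, l) + Min ((\<lambda>(c, d). cell_cost \<delta> A B (reflect_cell l c)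
      + cell_cost \<delta> A B (reflect_cell l d)) ` start_moves) \<le> sum ?c E"
    unfolding E_def by (intro end_move_le_sum[OF l3 wp]) (auto simp: cell_cost_def cost_nonneg)
  moreover have "(\<Sum>i=4..l-3. kappa \<delta> l w A B i) + (\<Sum>j=4..l-3. beta \<delta> l w A B j) \<le> sum ?c M"
    by (rule sum_kappa_beta_le_sum_cell_cost[OF wp]) (auto simp: M_def F_def E_def)
  ultimately show ?thesis
    unfolding LB_Petitjean_def minlrpaths_eq[OF l3] by linarith
qed

end

theorem theorem1:
  fixes l w :: nat and A B :: "nat \<Rightarrow> real" and \<delta> :: "real \<Rightarrow> real \<Rightarrow> real"
  assumes "l \<ge> 6"
    and "\<And>a b. \<delta> a b \<ge> 0"
    and "\<And>a b. \<delta> a b = \<delta> b a"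
    and "\<And>a. \<delta> a a = 0"
    and "\<And>a b x y. (a \<le> x \<and> x \<le> y \<and> y \<le> b) \<or> (a \<ge> x \<and> x \<ge> y \<and> y \<ge> b) \<Longrightarrow>
           \<delta> a b \<ge> \<delta> a y + \<delta> b x - \<delta> x y"
  shows "LB_Petitjean \<delta> l w A B \<le> DTW \<delta> l w A B"
proof -
  interpret dtw_cost \<delta>
    using assms(2-5) by unfold_locales blast+
  have "{path_cost \<delta> A B p | p. warping_path l w p} \<noteq> {}"
    using warping_path_diagonal[of l w] assms(1) by auto
  then show ?thesis
    unfolding DTW_def using LB_Petitjean_le_path_cost[OF assms(1)] by (auto intro: cInf_greatest)
qed

end
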